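(* Let $G$ be a finite subgroup of $\mathrm{U}(q)$, let $n\ge 1$, and let $\mathcal{H}=(\mathbb{C}^q)^{\otimes n}$, on which $\mathrm{U}(q)$ (and hence $G$) acts by $U\mapsto U^{\otimes n}$. Let $\mathcal{C}\subseteq\mathcal{H}$ be a subspace that transforms in an irreducible representation $\boldsymbol{\lambda}$ of $G$ (with character $\lambda$), and let $E$ be an operator on $\mathcal{H}$ that transforms in an irreducible representation $\boldsymbol{R}$ of $\mathrm{U}(q)$. If $\langle 1, \lambda^* R^{\downarrow}\lambda\rangle = 0$, then the Knill–Laflamme condition holds for $E$ on $\mathcal{C}$: there exists $c_E\in\mathbb{C}$ such that $\langle\psi|E|\phi\rangle = c_E\langle\psi|\phi\rangle$ for all $|\psi\rangle,|\phi\rangle\in\mathcal{C}$.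
   Context: A subspace $\mathcal{C}\subseteq\mathcal{H}$ transforms in the representation $\boldsymbol{\lambda}$ of $G$ if it is invariant under all $g^{\otimes n}$, $g\in G$, and the resulting representation of $G$ on $\mathcal{C}$ is isomorphic to $\boldsymbol{\lambda}$. An operator $E$ on $\mathcal{H}$ transforms in the representation $\boldsymbol{R}$ of $\mathrm{U}(q)$ if $E$ lies in a subspace $W$ of operators on $\mathcal{H}$ that is invariant under conjugation $X\mapsto U^{\otimes n}X(U^{\otimes n})^{\dagger}$ for all $U\in\mathrm{U}(q)$ and such that this conjugation representation of $\mathrm{U}(q)$ on $W$ is isomorphic to $\boldsymbol{R}$. $R^{\downarrow}$ is the character of the restriction of $\boldsymbol{R}$ to $G$, $1$ is the trivial character, $\lambda^*$ is the complex conjugate of $\lambda$, products of characters are pointwise, and $\langle\chi,\psi\rangle:=\frac{1}{|G|}\sum_{g\in G}\overline{\chi(g)}\psi(g)$. *)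

theory Defs
  imports "Jordan_Normal_Form.Matrix"
begin

definition cadj :: "complex mat \<Rightarrow> complex mat" where
  "cadj A = mat (dim_col A) (dim_row A) (\<lambda>(i,j). cnj (A $$ (j,i)))"

definition unitary_mat :: "nat \<Rightarrow> complex mat \<Rightarrow> bool" where
  "unitary_mat q U \<longleftrightarrow> U \<in> carrier_mat q q \<and> U * cadj U = 1\<^sub>m q \<and> cadj U * U = 1\<^sub>m q"

definition finite_subgroup_U :: "nat \<Rightarrow> complex mat set \<Rightarrow> bool" where
  "finite_subgroup_U q G \<longleftrightarrow> finite G \<and> (\<forall>g\<in>G. unitary_mat q g) \<and> 1\<^sub>m q \<in> G
     \<and> (\<forall>g\<in>G. \<forall>h\<in>G. g * h \<in> G) \<and> (\<forall>g\<in>G. cadj g \<in> G)"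

(* k-th digit in base q of the index i: the k-th tensor factor of the standard
   basis vector e_i of (C^q)^{\<otimes>n}, identified with C^(q^n) *)
definition digit :: "nat \<Rightarrow> nat \<Rightarrow> nat \<Rightarrow> nat" where
  "digit q k i = (i div q ^ k) mod q"

definition tensor_pow :: "nat \<Rightarrow> nat \<Rightarrow> complex mat \<Rightarrow> complex mat" where
  "tensor_pow q n U = mat (q ^ n) (q ^ n)
     (\<lambda>(i,j). \<Prod>k<n. U $$ (digit q k i, digit q k j))"

definition vinner :: "complex vec \<Rightarrow> complex vec \<Rightarrow> complex" where
  "vinner \<psi> \<phi> = (\<Sum>i<dim_vec \<phi>. cnj (\<psi> $ i) * \<phi> $ i)"

definition vsubspace :: "nat \<Rightarrow> complex vec set \<Rightarrow> bool" where
  "vsubspace N S \<longleftrightarrow> S \<subseteq> carrier_vec N \<and> 0\<^sub>v N \<in> S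
     \<and> (\<forall>x\<in>S. \<forall>y\<in>S. x + y \<in> S) \<and> (\<forall>c. \<forall>x\<in>S. c \<cdot>\<^sub>v x \<in> S)"

definition vonb :: "nat \<Rightarrow> complex vec set \<Rightarrow> complex vec list \<Rightarrow> bool" where
  "vonb N S bs \<longleftrightarrow> set bs \<subseteq> S
     \<and> (\<forall>i<length bs. \<forall>j<length bs. vinner (bs ! i) (bs ! j) = (if i = j then 1 else 0))
     \<and> (\<forall>x\<in>S. \<forall>k<N. x $ k = (\<Sum>i<length bs. vinner (bs ! i) x * (bs ! i) $ k))"

definition vinvariant :: "'g set \<Rightarrow> ('g \<Rightarrow> complex vec \<Rightarrow> complex vec) \<Rightarrow> complex vec set \<Rightarrow> bool" where
  "vinvariant G \<rho> S \<longleftrightarrow> (\<forall>g\<in>G. \<forall>x\<in>S. \<rho> g x \<in> S)"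

definition virreducible :: "nat \<Rightarrow> 'g set \<Rightarrow> ('g \<Rightarrow> complex vec \<Rightarrow> complex vec) \<Rightarrow> complex vec set \<Rightarrow> bool" where
  "virreducible N G \<rho> S \<longleftrightarrow> S \<noteq> {0\<^sub>v N} \<and>
     (\<forall>T. vsubspace N T \<and> T \<subseteq> S \<and> vinvariant G \<rho> T \<longrightarrow> T = {0\<^sub>v N} \<or> T = S)"

definition vcharacter :: "nat \<Rightarrow> ('g \<Rightarrow> complex vec \<Rightarrow> complex vec) \<Rightarrow> complex vec set \<Rightarrow> 'g \<Rightarrow> complex" where
  "vcharacter N \<rho> S g = (let bs = (SOME bs. vonb N S bs) in
     \<Sum>i<length bs. vinner (bs ! i) (\<rho> g (bs ! i)))"

definition minner :: "complex mat \<Rightarrow> complex mat \<Rightarrow> complex" where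
  "minner A B = (\<Sum>i<dim_row B. \<Sum>j<dim_col B. cnj (A $$ (i,j)) * B $$ (i,j))"

definition msubspace :: "nat \<Rightarrow> complex mat set \<Rightarrow> bool" where
  "msubspace N S \<longleftrightarrow> S \<subseteq> carrier_mat N N \<and> 0\<^sub>m N N \<in> S
     \<and> (\<forall>x\<in>S. \<forall>y\<in>S. x + y \<in> S) \<and> (\<forall>c. \<forall>x\<in>S. c \<cdot>\<^sub>m x \<in> S)"

definition monb :: "nat \<Rightarrow> complex mat set \<Rightarrow> complex mat list \<Rightarrow> bool" where
  "monb N S bs \<longleftrightarrow> set bs \<subseteq> S
     \<and> (\<forall>i<length bs. \<forall>j<length bs. minner (bs ! i) (bs ! j) = (if i = j then 1 else 0))
     \<and> (\<forall>x\<in>S. \<forall>k<N. \<forall>l<N. x $$ (k,l) = (\<Sum>i<length bs. minner (bs ! i) x * (bs ! i) $$ (k,l)))"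

definition minvariant :: "'g set \<Rightarrow> ('g \<Rightarrow> complex mat \<Rightarrow> complex mat) \<Rightarrow> complex mat set \<Rightarrow> bool" where
  "minvariant G \<rho> S \<longleftrightarrow> (\<forall>g\<in>G. \<forall>x\<in>S. \<rho> g x \<in> S)"

definition mirreducible :: "nat \<Rightarrow> 'g set \<Rightarrow> ('g \<Rightarrow> complex mat \<Rightarrow> complex mat) \<Rightarrow> complex mat set \<Rightarrow> bool" where
  "mirreducible N G \<rho> S \<longleftrightarrow> S \<noteq> {0\<^sub>m N N} \<and>
     (\<forall>T. msubspace N T \<and> T \<subseteq> S \<and> minvariant G \<rho> T \<longrightarrow> T = {0\<^sub>m N N} \<or> T = S)"

definition mcharacter :: "nat \<Rightarrow> ('g \<Rightarrow> complex mat \<Rightarrow> complex mat) \<Rightarrow> complex mat set \<Rightarrow> 'g \<Rightarrow> complex" where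
  "mcharacter N \<rho> S g = (let bs = (SOME bs. monb N S bs) in
     \<Sum>i<length bs. minner (bs ! i) (\<rho> g (bs ! i)))"

definition tensor_action :: "nat \<Rightarrow> nat \<Rightarrow> complex mat \<Rightarrow> complex vec \<Rightarrow> complex vec" where
  "tensor_action q n U v = tensor_pow q n U *\<^sub>v v"

definition conj_action :: "nat \<Rightarrow> nat \<Rightarrow> complex mat \<Rightarrow> complex mat \<Rightarrow> complex mat" where
  "conj_action q n U X = tensor_pow q n U * X * cadj (tensor_pow q n U)"

end

(*
  Fix orthonormal bases (c_i) of C and (B_a) of W. The numbers t(a,i,j) = <c_i|B_a c_j> are the
  coordinates of the compression map X |-> P_C X P_C in Hom(W, End C), which is G-equivariant, so
  t is an invariant vector of the representation conj(R) (x) lambda (x) conj(lambda) of G. The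
  group average of that representation is |G| times the orthogonal projection onto its invariant
  vectors; its trace is the sum over G of conj(R) lambda conj(lambda), the conjugate of the
  hypothesis, hence 0. A self-adjoint idempotent of trace 0 vanishes, so t = 0: every X in W has
  vanishing compression to C, and the Knill-Laflamme condition holds with c_E = 0.
*)
theory Submission
  imports Defs
begin

section \<open>Inner products of coordinate functions\<close>

text \<open>Both \<open>vinner\<close> and \<open>minner\<close> are instances, with index sets \<open>{..<N}\<close> and
  \<open>{..<N} \<times> {..<N}\<close>.\<close>

definition inner_on :: "'i set \<Rightarrow> ('i \<Rightarrow> complex) \<Rightarrow> ('i \<Rightarrow> complex) \<Rightarrow> complex" where
  "inner_on I f g = (\<Sum>i\<in>I. cnj (f i) * g i)"

lemma inner_on_cnj: "cnj (inner_on I f g) = inner_on I g f"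
  unfolding inner_on_def by (simp add: mult.commute)

lemma inner_on_self: "inner_on I f f = of_real (\<Sum>i\<in>I. (cmod (f i))\<^sup>2)"
proof -
  have "cnj (f i) * f i = of_real ((cmod (f i))\<^sup>2)" for i
    unfolding complex_norm_square by (simp add: mult.commute)
  then show ?thesis unfolding inner_on_def by simp
qed

lemma inner_on_cong:
  "(\<And>i. i \<in> I \<Longrightarrow> f i = f' i) \<Longrightarrow> (\<And>i. i \<in> I \<Longrightarrow> g i = g' i) \<Longrightarrow> inner_on I f g = inner_on I f' g'"
  unfolding inner_on_def by (intro sum.cong) auto

lemma inner_on_scale_right: "inner_on I f (\<lambda>i. c * g i) = c * inner_on I f g"
  unfolding inner_on_def by (simp add: sum_distrib_left mult.left_commute)

lemma inner_on_scale_left: "inner_on I (\<lambda>i. c * f i) g = cnj c * inner_on I f g"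
  unfolding inner_on_def by (simp add: sum_distrib_left mult.assoc)

lemma inner_on_diff_right: "inner_on I f (\<lambda>i. g i - h i) = inner_on I f g - inner_on I f h"
  unfolding inner_on_def by (simp add: right_diff_distrib sum_subtractf)

lemma inner_on_diff_left: "inner_on I (\<lambda>i. f i - h i) g = inner_on I f g - inner_on I h g"
  unfolding inner_on_def by (simp add: left_diff_distrib sum_subtractf)

lemma inner_on_sum_right:
  assumes "\<And>i. i \<in> I \<Longrightarrow> g i = (\<Sum>j\<in>J. \<alpha> j * h j i)"
  shows "inner_on I f g = (\<Sum>j\<in>J. \<alpha> j * inner_on I f (h j))"
proof -
  have "inner_on I f g = (\<Sum>i\<in>I. \<Sum>j\<in>J. \<alpha> j * (cnj (f i) * h j i))"
    unfolding inner_on_def using assms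
    by (intro sum.cong) (simp_all add: sum_distrib_left mult.left_commute)
  also have "\<dots> = (\<Sum>j\<in>J. \<alpha> j * inner_on I f (h j))"
    unfolding inner_on_def by (subst sum.swap) (simp add: sum_distrib_left)
  finally show ?thesis .
qed

lemma inner_on_sum_left:
  assumes "\<And>i. i \<in> I \<Longrightarrow> f i = (\<Sum>j\<in>J. \<alpha> j * h j i)"
  shows "inner_on I f g = (\<Sum>j\<in>J. cnj (\<alpha> j) * inner_on I (h j) g)"
proof -
  have "inner_on I g f = (\<Sum>j\<in>J. \<alpha> j * inner_on I g (h j))"
    using assms by (rule inner_on_sum_right)
  then have "cnj (inner_on I g f) = (\<Sum>j\<in>J. cnj (\<alpha> j) * inner_on I (h j) g)"
    by (simp add: cnj_sum inner_on_cnj)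
  then show ?thesis
    by (simp only: inner_on_cnj)
qed

definition orthonormal_on :: "'i set \<Rightarrow> ('i \<Rightarrow> complex) list \<Rightarrow> bool" where
  "orthonormal_on I bs \<longleftrightarrow>
     (\<forall>j<length bs. \<forall>k<length bs. inner_on I (bs ! j) (bs ! k) = (if j = k then 1 else 0))"

lemma orthonormal_on_residual:
  assumes "orthonormal_on I bs" "l < length bs"
  shows "inner_on I (bs ! l) (\<lambda>i. f i - (\<Sum>j<length bs. inner_on I (bs ! j) f * (bs ! j) i)) = 0"
proof -
  have "inner_on I (bs ! l) (\<lambda>i. \<Sum>j<length bs. inner_on I (bs ! j) f * (bs ! j) i)
      = (\<Sum>j<length bs. inner_on I (bs ! j) f * (if l = j then 1 else 0))"
    using assms unfolding orthonormal_on_def by (subst inner_on_sum_right[OF refl]) simp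
  also have "\<dots> = inner_on I (bs ! l) f"
    using assms(2) by (simp add: if_distrib cong: if_cong)
  finally show ?thesis by (simp add: inner_on_diff_right)
qed

lemma bessel_inequality:
  assumes "orthonormal_on I bs"
  shows "(\<Sum>j<length bs. (cmod (inner_on I (bs ! j) f))\<^sup>2) \<le> Re (inner_on I f f)"
proof -
  define \<alpha> where "\<alpha> j = inner_on I (bs ! j) f" for j
  define s where "s i = (\<Sum>j<length bs. \<alpha> j * (bs ! j) i)" for i
  define r where "r = (\<lambda>i. f i - s i)"
  have "inner_on I (bs ! j) r = 0" if "j < length bs" for j
    using orthonormal_on_residual[OF assms that] unfolding r_def s_def \<alpha>_def .
  then have "inner_on I s r = 0"
    by (simp add: inner_on_sum_left[where h="\<lambda>j. bs ! j" and \<alpha>=\<alpha>] s_def)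
  moreover have "inner_on I r r = inner_on I f r - inner_on I s r"
    unfolding r_def by (rule inner_on_diff_left)
  ultimately have "inner_on I r r = inner_on I f r" by simp
  also have "\<dots> = inner_on I f f - inner_on I f s"
    unfolding r_def by (rule inner_on_diff_right)
  also have "inner_on I f s = (\<Sum>j<length bs. \<alpha> j * inner_on I f (bs ! j))"
    by (rule inner_on_sum_right) (simp add: s_def)
  also have "\<dots> = of_real (\<Sum>j<length bs. (cmod (\<alpha> j))\<^sup>2)"
  proof -
    have "\<alpha> j * inner_on I f (bs ! j) = of_real ((cmod (\<alpha> j))\<^sup>2)" for j
      unfolding complex_norm_square \<alpha>_def by (simp add: inner_on_cnj[of I "bs ! j" f, symmetric])
    then show ?thesis by simp
  qed
  finally have "inner_on I r r = inner_on I f f - of_real (\<Sum>j<length bs. (cmod (\<alpha> j))\<^sup>2)" .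
  then have "Re (inner_on I r r) = Re (inner_on I f f) - (\<Sum>j<length bs. (cmod (\<alpha> j))\<^sup>2)"
    by simp
  moreover have "0 \<le> Re (inner_on I r r)"
    by (simp add: inner_on_self sum_nonneg)
  ultimately have "(\<Sum>j<length bs. (cmod (\<alpha> j))\<^sup>2) \<le> Re (inner_on I f f)"
    by linarith
  then show ?thesis
    by (simp only: \<alpha>_def)
qed

lemma orthonormal_on_length_le_card:
  fixes I :: "'i set"
  assumes "finite I" "orthonormal_on I bs"
  shows "length bs \<le> card I"
proof -
  define e where "e l i = (if i = l then 1 else 0 :: complex)" for l i :: 'i
  have e_coeff: "inner_on I (bs ! j) (e l) = cnj ((bs ! j) l)" if "l \<in> I" for j l
    using that assms(1) by (simp add: inner_on_def e_def if_distrib cong: if_cong)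
  have e_norm: "Re (inner_on I (e l) (e l)) = 1" if "l \<in> I" for l
    using that assms(1) by (simp add: inner_on_def e_def if_distrib cong: if_cong)
  have "real (length bs) = (\<Sum>j<length bs. Re (inner_on I (bs ! j) (bs ! j)))"
    using assms(2) by (simp add: orthonormal_on_def)
  also have "\<dots> = (\<Sum>l\<in>I. \<Sum>j<length bs. (cmod (inner_on I (bs ! j) (e l)))\<^sup>2)"
    by (simp add: inner_on_self e_coeff sum.swap[of _ I])
  also have "\<dots> \<le> (\<Sum>l\<in>I. Re (inner_on I (e l) (e l)))"
    by (intro sum_mono bessel_inequality assms(2))
  also have "\<dots> = card I"
    by (simp add: e_norm)
  finally show ?thesis
    by linarith
qed

lemma orthonormal_on_snoc:
  assumes "orthonormal_on I bs" "\<And>j. j < length bs \<Longrightarrow> inner_on I (bs ! j) r = 0"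
    and "inner_on I r r = 1"
  shows "orthonormal_on I (bs @ [r])"
proof -
  have "inner_on I r (bs ! j) = 0" if "j < length bs" for j
    using assms(2)[OF that] inner_on_cnj[of I "bs ! j" r] by simp
  then show ?thesis
    using assms unfolding orthonormal_on_def by (auto simp: nth_append less_Suc_eq)
qed

lemma inner_on_normalize:
  assumes "finite I" "i \<in> I" "f i \<noteq> 0"
  shows "\<exists>c. inner_on I (\<lambda>i. c * f i) (\<lambda>i. c * f i) = 1"
proof -
  define \<nu> where "\<nu> = (\<Sum>i\<in>I. (cmod (f i))\<^sup>2)"
  have "\<nu> > 0"
    unfolding \<nu>_def using assms by (intro sum_pos2[of I i]) auto
  define c where "c = complex_of_real (1 / sqrt \<nu>)"
  have "inner_on I (\<lambda>i. c * f i) (\<lambda>i. c * f i) = cnj c * c * of_real \<nu>"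
    by (simp only: inner_on_scale_left inner_on_scale_right inner_on_self \<nu>_def mult.assoc)
  also have "\<dots> = 1"
    using \<open>\<nu> > 0\<close> by (simp add: c_def flip: of_real_mult)
  finally show ?thesis ..
qed

lemma linear_combination_mem:
  fixes co :: "'v \<Rightarrow> 'i \<Rightarrow> complex" and m :: nat
  assumes add: "\<And>x y. x \<in> S \<Longrightarrow> y \<in> S \<Longrightarrow> \<exists>z\<in>S. \<forall>i\<in>I. co z i = co x i + co y i"
    and scale: "\<And>c x. x \<in> S \<Longrightarrow> \<exists>z\<in>S. \<forall>i\<in>I. co z i = c * co x i"
    and "x \<in> S" "\<And>j. j < m \<Longrightarrow> b j \<in> S"
  shows "\<exists>y\<in>S. \<forall>i\<in>I. co y i = co x i + (\<Sum>j<m. \<alpha> j * co (b j) i)"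
  using assms(4)
proof (induction m)
  case 0
  then show ?case using \<open>x \<in> S\<close> by auto
next
  case (Suc m)
  then obtain y where "y \<in> S" and y: "\<forall>i\<in>I. co y i = co x i + (\<Sum>j<m. \<alpha> j * co (b j) i)"
    by auto
  obtain z where "z \<in> S" and z: "\<forall>i\<in>I. co z i = \<alpha> m * co (b m) i"
    using scale Suc.prems by blast
  obtain w where "w \<in> S" and w: "\<forall>i\<in>I. co w i = co y i + co z i"
    using add[OF \<open>y \<in> S\<close> \<open>z \<in> S\<close>] by blast
  show ?case
    using \<open>w \<in> S\<close> w y z by (auto simp: add.assoc)
qed

lemma orthonormal_on_extend:
  fixes co :: "'v \<Rightarrow> 'i \<Rightarrow> complex"
  assumes "finite I"
    and add: "\<And>x y. x \<in> S \<Longrightarrow> y \<in> S \<Longrightarrow> \<exists>z\<in>S. \<forall>i\<in>I. co z i = co x i + co y i"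
    and scale: "\<And>c x. x \<in> S \<Longrightarrow> \<exists>z\<in>S. \<forall>i\<in>I. co z i = c * co x i"
    and bsS: "set bs \<subseteq> S" and orth: "orthonormal_on I (map co bs)" and "x \<in> S" "i \<in> I"
    and outside: "co x i \<noteq> (\<Sum>j<length bs. inner_on I (co (bs ! j)) (co x) * co (bs ! j) i)"
  shows "\<exists>s\<in>S. orthonormal_on I (map co (bs @ [s]))"
proof -
  have bs_mem: "bs ! j \<in> S" if "j < length bs" for j
    using bsS that by auto
  obtain r where "r \<in> S"
    and r: "\<forall>i\<in>I. co r i = co x i - (\<Sum>j<length bs. inner_on I (co (bs ! j)) (co x) * co (bs ! j) i)"
    using linear_combination_mem[OF add scale \<open>x \<in> S\<close>, of "length bs" "\<lambda>j. bs ! j"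
        "\<lambda>j. - inner_on I (co (bs ! j)) (co x)"] bs_mem
    by (auto simp: sum_negf)
  have r_orth: "inner_on I (co (bs ! j)) (co r) = 0" if "j < length bs" for j
    using orthonormal_on_residual[OF orth, of j "co x"] that r
    by (simp add: inner_on_cong[OF refl, of I "co r"])
  have "co r i \<noteq> 0"
    using outside r \<open>i \<in> I\<close> by simp
  then obtain c where c: "inner_on I (\<lambda>i. c * co r i) (\<lambda>i. c * co r i) = 1"
    using inner_on_normalize[OF assms(1) \<open>i \<in> I\<close>] by blast
  obtain s where "s \<in> S" and s: "\<forall>i\<in>I. co s i = c * co r i"
    using scale[OF \<open>r \<in> S\<close>] by blast
  have "orthonormal_on I (map co bs @ [co s])"
  proof (rule orthonormal_on_snoc[OF orth])
    fix j assume "j < length (map co bs)"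
    then show "inner_on I (map co bs ! j) (co s) = 0"
      using s r_orth by (simp add: inner_on_cong[of I _ _ "co s" "\<lambda>i. c * co r i"] inner_on_scale_right)
  next
    show "inner_on I (co s) (co s) = 1"
      using s c by (simp add: inner_on_cong[of I "co s" "\<lambda>i. c * co r i" "co s" "\<lambda>i. c * co r i"])
  qed
  then show ?thesis
    using \<open>s \<in> S\<close> by auto
qed

text \<open>A longest orthonormal family in \<open>S\<close> spans \<open>S\<close>, since otherwise it could be extended.\<close>

lemma orthonormal_basis_exists:
  fixes co :: "'v \<Rightarrow> 'i \<Rightarrow> complex"
  assumes "finite I"
    and add: "\<And>x y. x \<in> S \<Longrightarrow> y \<in> S \<Longrightarrow> \<exists>z\<in>S. \<forall>i\<in>I. co z i = co x i + co y i"
    and scale: "\<And>c x. x \<in> S \<Longrightarrow> \<exists>z\<in>S. \<forall>i\<in>I. co z i = c * co x i"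
  shows "\<exists>bs. set bs \<subseteq> S \<and> orthonormal_on I (map co bs) \<and>
    (\<forall>x\<in>S. \<forall>i\<in>I. co x i = (\<Sum>j<length bs. inner_on I (co (bs ! j)) (co x) * co (bs ! j) i))"
proof -
  define P where "P bs \<longleftrightarrow> set bs \<subseteq> S \<and> orthonormal_on I (map co bs)" for bs
  have "P []"
    by (simp add: P_def orthonormal_on_def)
  moreover have "\<forall>bs. P bs \<longrightarrow> length bs < Suc (card I)"
    using orthonormal_on_length_le_card[OF assms(1)] by (fastforce simp: P_def)
  ultimately obtain bs where "P bs" and longest: "\<And>bs'. P bs' \<Longrightarrow> length bs' \<le> length bs"
    using ex_has_greatest_nat[of P "[]" length "Suc (card I)"] by metis
  then have bsS: "set bs \<subseteq> S" and orth: "orthonormal_on I (map co bs)"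
    by (auto simp: P_def)
  have "co x i = (\<Sum>j<length bs. inner_on I (co (bs ! j)) (co x) * co (bs ! j) i)"
    if x: "x \<in> S" and i: "i \<in> I" for x i
  proof (rule ccontr)
    assume "co x i \<noteq> (\<Sum>j<length bs. inner_on I (co (bs ! j)) (co x) * co (bs ! j) i)"
    then obtain s where "s \<in> S" "orthonormal_on I (map co (bs @ [s]))"
      using orthonormal_on_extend[OF assms bsS orth x i] by blast
    then show False
      using longest[of "bs @ [s]"] bsS by (simp add: P_def)
  qed
  then show ?thesis
    using bsS orth by blast
qed

section \<open>Adjoints and inner products of complex matrices\<close>

lemma dim_cadj [simp]: "dim_row (cadj A) = dim_col A" "dim_col (cadj A) = dim_row A"
  unfolding cadj_def by simp_all

lemma cadj_index [simp]: "i < dim_col A \<Longrightarrow> j < dim_row A \<Longrightarrow> cadj A $$ (i, j) = cnj (A $$ (j, i))"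
  unfolding cadj_def by simp

lemma cadj_carrier [simp]: "A \<in> carrier_mat r c \<Longrightarrow> cadj A \<in> carrier_mat c r"
  by auto

lemma cadj_cadj [simp]: "cadj (cadj A) = A"
  by (rule eq_matI) auto

lemma cadj_mult:
  assumes "A \<in> carrier_mat n k" "B \<in> carrier_mat k m"
  shows "cadj (A * B) = cadj B * cadj A"
  using assms by (intro eq_matI) (auto simp: scalar_prod_def atLeast0LessThan cnj_sum mult.commute)

lemma index_mult_mat_triple:
  assumes "M \<in> carrier_mat N N" "Y \<in> carrier_mat N N" "M' \<in> carrier_mat N N"
    and "x \<in> {..<N} \<times> {..<N}"
  shows "(M * Y * M') $$ x = (\<Sum>y\<in>{..<N} \<times> {..<N}. M $$ (fst x, fst y) * Y $$ y * M' $$ (snd y, snd x))"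
proof -
  have "(M * Y * M') $$ x = (\<Sum>p<N. \<Sum>q<N. M $$ (fst x, p) * Y $$ (p, q) * M' $$ (q, snd x))"
    using assms by (auto simp: scalar_prod_def atLeast0LessThan sum_distrib_left mult.assoc)
  then show ?thesis
    by (simp add: sum.cartesian_product case_prod_unfold)
qed

lemma vinner_cnj: "x \<in> carrier_vec N \<Longrightarrow> y \<in> carrier_vec N \<Longrightarrow> cnj (vinner x y) = vinner y x"
  by (simp add: vinner_def cnj_sum mult.commute)

lemma vinner_adjoint:
  assumes "A \<in> carrier_mat N N" "a \<in> carrier_vec N" "b \<in> carrier_vec N"
  shows "vinner (cadj A *\<^sub>v a) b = vinner a (A *\<^sub>v b)"
proof -
  have "vinner (cadj A *\<^sub>v a) b = (\<Sum>k<N. \<Sum>s<N. cnj (a $ s) * (A $$ (s, k) * b $ k))"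
    using assms
    by (simp add: vinner_def scalar_prod_def atLeast0LessThan cnj_sum sum_distrib_left sum_distrib_right mult_ac)
  also have "\<dots> = vinner a (A *\<^sub>v b)"
    using assms by (subst sum.swap) (simp add: vinner_def scalar_prod_def atLeast0LessThan sum_distrib_left)
  finally show ?thesis .
qed

lemma vinner_adjoint':
  assumes "A \<in> carrier_mat N N" "a \<in> carrier_vec N" "b \<in> carrier_vec N"
  shows "vinner a (cadj A *\<^sub>v b) = vinner (A *\<^sub>v a) b"
  using vinner_adjoint[of "cadj A" N a b] assms by simp

lemma minner_pairs:
  "B \<in> carrier_mat N N \<Longrightarrow> minner A B = (\<Sum>x\<in>{..<N} \<times> {..<N}. cnj (A $$ x) * B $$ x)"
  by (simp add: minner_def sum.cartesian_product case_prod_unfold)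

lemma minner_cnj: "A \<in> carrier_mat N N \<Longrightarrow> B \<in> carrier_mat N N \<Longrightarrow> cnj (minner A B) = minner B A"
  by (simp add: minner_def cnj_sum mult.commute)

lemma minner_conj:
  assumes "A \<in> carrier_mat N N" "B \<in> carrier_mat N N" "U \<in> carrier_mat N N"
  shows "minner (U * A * cadj U) B = minner A (cadj U * B * U)"
proof -
  let ?I = "{..<N} \<times> {..<N}"
  let ?t = "\<lambda>x y. cnj (A $$ y) * cnj (U $$ (fst x, fst y)) * B $$ x * U $$ (snd x, snd y)"
  have UAU: "(U * A * cadj U) $$ x = (\<Sum>y\<in>?I. U $$ (fst x, fst y) * A $$ y * cnj (U $$ (snd x, snd y)))"
    if "x \<in> ?I" for x
    using that assms by (auto simp: index_mult_mat_triple[of U N A "cadj U"] intro!: sum.cong)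
  have UBU: "(cadj U * B * U) $$ y = (\<Sum>x\<in>?I. cnj (U $$ (fst x, fst y)) * B $$ x * U $$ (snd x, snd y))"
    if "y \<in> ?I" for y
    using that assms by (auto simp: index_mult_mat_triple[of "cadj U" N B U] intro!: sum.cong)
  have "minner (U * A * cadj U) B = (\<Sum>x\<in>?I. \<Sum>y\<in>?I. ?t x y)"
    using assms by (simp add: minner_pairs UAU cnj_sum sum_distrib_left sum_distrib_right mult_ac)
  also have "\<dots> = (\<Sum>y\<in>?I. \<Sum>x\<in>?I. ?t x y)"
    by (rule sum.swap)
  also have "\<dots> = minner A (cadj U * B * U)"
  proof -
    have "cadj U * B * U \<in> carrier_mat N N"
      using assms by (metis cadj_carrier mult_carrier_mat)
    then show ?thesis
      by (simp add: minner_pairs UBU sum_distrib_left mult_ac)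
  qed
  finally show ?thesis .
qed

lemma minner_conj':
  assumes "A \<in> carrier_mat N N" "B \<in> carrier_mat N N" "U \<in> carrier_mat N N"
  shows "minner (cadj U * A * U) B = minner A (U * B * cadj U)"
  using minner_conj[of A N B "cadj U"] assms by simp

lemma conj_mult_cancel:
  fixes U V B :: "'a :: semiring_1 mat"
  assumes "U \<in> carrier_mat N N" "V \<in> carrier_mat N N" "B \<in> carrier_mat N N" "U * V = 1\<^sub>m N"
  shows "U * (V * B * U) * V = B"
proof -
  have "U * (V * B * U) * V = (U * V) * B * (U * V)"
    using assms(1-3) by (simp add: assoc_mult_mat[of _ N N _ N _ N])
  then show ?thesis
    using assms(4) by (simp add: left_mult_one_mat[OF assms(3)] right_mult_one_mat[OF assms(3)])
qed

definition ket_bra :: "complex vec \<Rightarrow> complex vec \<Rightarrow> complex mat" where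
  "ket_bra v w = mat (dim_vec v) (dim_vec w) (\<lambda>(p, r). v $ p * cnj (w $ r))"

lemma minner_ket_bra:
  assumes "v \<in> carrier_vec N" "w \<in> carrier_vec N" "X \<in> carrier_mat N N"
  shows "minner (ket_bra v w) X = vinner v (X *\<^sub>v w)"
  using assms
  by (simp add: minner_def vinner_def ket_bra_def scalar_prod_def atLeast0LessThan sum_distrib_left mult_ac)

lemma ket_bra_carrier: "v \<in> carrier_vec N \<Longrightarrow> w \<in> carrier_vec N \<Longrightarrow> ket_bra v w \<in> carrier_mat N N"
  by (simp add: ket_bra_def)

section \<open>Orthonormal bases of subspaces\<close>

lemma vinner_eq_inner_on: "\<phi> \<in> carrier_vec N \<Longrightarrow> vinner \<psi> \<phi> = inner_on {..<N} (($) \<psi>) (($) \<phi>)"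
  by (simp add: vinner_def inner_on_def)

lemma minner_eq_inner_on:
  "B \<in> carrier_mat N N \<Longrightarrow> minner A B = inner_on ({..<N} \<times> {..<N}) (($$) A) (($$) B)"
  by (simp add: minner_pairs inner_on_def)

lemma vonb_exists:
  assumes "vsubspace N S"
  shows "\<exists>bs. vonb N S bs"
proof -
  have S: "S \<subseteq> carrier_vec N"
    using assms unfolding vsubspace_def by auto
  have "\<exists>bs. set bs \<subseteq> S \<and> orthonormal_on {..<N} (map ($) bs) \<and>
    (\<forall>x\<in>S. \<forall>i\<in>{..<N}. x $ i = (\<Sum>j<length bs. inner_on {..<N} (($) (bs ! j)) (($) x) * bs ! j $ i))"
  proof (rule orthonormal_basis_exists[where co = "($)"])
    fix x y assume "x \<in> S" "y \<in> S"
    then show "\<exists>z\<in>S. \<forall>i\<in>{..<N}. z $ i = x $ i + y $ i"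
      using assms S unfolding vsubspace_def by (intro bexI[of _ "x + y"]) auto
  next
    fix c x assume "x \<in> S"
    then show "\<exists>z\<in>S. \<forall>i\<in>{..<N}. z $ i = c * x $ i"
      using assms S unfolding vsubspace_def by (intro bexI[of _ "c \<cdot>\<^sub>v x"]) auto
  qed simp
  moreover have "vinner a b = inner_on {..<N} (($) a) (($) b)" if "b \<in> S" for a b
    using that S by (auto intro: vinner_eq_inner_on)
  ultimately show ?thesis
    unfolding vonb_def orthonormal_on_def by (auto simp: subsetD)
qed

lemma monb_exists:
  assumes "msubspace N S"
  shows "\<exists>bs. monb N S bs"
proof -
  let ?I = "{..<N} \<times> {..<N}"
  have S: "S \<subseteq> carrier_mat N N"
    using assms unfolding msubspace_def by auto
  have "\<exists>bs. set bs \<subseteq> S \<and> orthonormal_on ?I (map ($$) bs) \<and>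
    (\<forall>x\<in>S. \<forall>i\<in>?I. x $$ i = (\<Sum>j<length bs. inner_on ?I (($$) (bs ! j)) (($$) x) * bs ! j $$ i))"
  proof (rule orthonormal_basis_exists[where co = "($$)"])
    fix x y assume "x \<in> S" "y \<in> S"
    then show "\<exists>z\<in>S. \<forall>i\<in>?I. z $$ i = x $$ i + y $$ i"
      using assms S unfolding msubspace_def by (intro bexI[of _ "x + y"]) auto
  next
    fix c x assume "x \<in> S"
    then show "\<exists>z\<in>S. \<forall>i\<in>?I. z $$ i = c * x $$ i"
      using assms S unfolding msubspace_def by (intro bexI[of _ "c \<cdot>\<^sub>m x"]) auto
  qed simp
  moreover have "minner a b = inner_on ?I (($$) a) (($$) b)" if "b \<in> S" for a b
    using that S by (auto intro: minner_eq_inner_on)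
  ultimately show ?thesis
    unfolding monb_def orthonormal_on_def by (auto simp: subsetD)
qed

lemma vonb_nth_mem: "vonb N S bs \<Longrightarrow> i < length bs \<Longrightarrow> bs ! i \<in> S"
  unfolding vonb_def by (auto dest: nth_mem)

lemma monb_nth_mem: "monb N S bs \<Longrightarrow> a < length bs \<Longrightarrow> bs ! a \<in> S"
  unfolding monb_def by (auto dest: nth_mem)

lemma vonb_parseval:
  assumes "vonb N S bs" "S \<subseteq> carrier_vec N" "x \<in> S"
  shows "vinner y x = (\<Sum>i<length bs. vinner y (bs ! i) * vinner (bs ! i) x)"
proof -
  have bs: "bs ! i \<in> carrier_vec N" if "i < length bs" for i
    using assms(2) vonb_nth_mem[OF assms(1) that] by auto
  have "vinner y x = inner_on {..<N} (($) y) (($) x)"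
    using assms by (auto intro: vinner_eq_inner_on)
  also have "\<dots> = (\<Sum>i<length bs. vinner (bs ! i) x * inner_on {..<N} (($) y) (($) (bs ! i)))"
    using assms unfolding vonb_def by (intro inner_on_sum_right) auto
  also have "\<dots> = (\<Sum>i<length bs. vinner y (bs ! i) * vinner (bs ! i) x)"
    using bs by (intro sum.cong refl) (simp add: vinner_eq_inner_on[of _ N])
  finally show ?thesis .
qed

lemma vonb_parseval_left:
  assumes "vonb N S bs" "S \<subseteq> carrier_vec N" "x \<in> S" "y \<in> carrier_vec N"
  shows "vinner x y = (\<Sum>i<length bs. vinner x (bs ! i) * vinner (bs ! i) y)"
proof -
  have bs: "bs ! i \<in> carrier_vec N" if "i < length bs" for i
    using assms(2) vonb_nth_mem[OF assms(1) that] by auto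
  have "cnj (vinner y x) = (\<Sum>i<length bs. cnj (vinner y (bs ! i)) * cnj (vinner (bs ! i) x))"
    by (simp add: vonb_parseval[OF assms(1-3), of y] cnj_sum)
  then show ?thesis
    using assms bs by (simp add: vinner_cnj[of _ N] subsetD mult.commute)
qed

lemma vonb_sandwich:
  assumes "vonb N S bs" "S \<subseteq> carrier_vec N" "x \<in> S" "y \<in> S" "Y \<in> carrier_mat N N"
  shows "vinner x (Y *\<^sub>v y) = (\<Sum>i<length bs. \<Sum>j<length bs.
    vinner x (bs ! i) * vinner (bs ! i) (Y *\<^sub>v bs ! j) * vinner (bs ! j) y)"
proof -
  have bs: "bs ! i \<in> carrier_vec N" if "i < length bs" for i
    using assms(2) vonb_nth_mem[OF assms(1) that] by auto
  have xy: "x \<in> carrier_vec N" "y \<in> carrier_vec N"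
    using assms by auto
  have "vinner x (Y *\<^sub>v y) = vinner (cadj Y *\<^sub>v x) y"
    using assms xy by (simp add: vinner_adjoint)
  also have "\<dots> = (\<Sum>j<length bs. vinner (cadj Y *\<^sub>v x) (bs ! j) * vinner (bs ! j) y)"
    by (rule vonb_parseval[OF assms(1,2,4)])
  also have "\<dots> = (\<Sum>j<length bs. vinner x (Y *\<^sub>v bs ! j) * vinner (bs ! j) y)"
    using assms xy bs by (simp add: vinner_adjoint)
  also have "\<dots> = (\<Sum>j<length bs. \<Sum>i<length bs.
      vinner x (bs ! i) * vinner (bs ! i) (Y *\<^sub>v bs ! j) * vinner (bs ! j) y)"
  proof -
    have "vinner x (Y *\<^sub>v bs ! j) = (\<Sum>i<length bs. vinner x (bs ! i) * vinner (bs ! i) (Y *\<^sub>v bs ! j))"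
      if "j < length bs" for j
      using assms(5) bs[OF that] by (intro vonb_parseval_left[OF assms(1-3)]) auto
    then show ?thesis
      by (simp add: sum_distrib_right)
  qed
  finally show ?thesis
    by (subst sum.swap)
qed

lemma monb_parseval:
  assumes "monb N S bs" "S \<subseteq> carrier_mat N N" "X \<in> S"
  shows "minner Y X = (\<Sum>a<length bs. minner Y (bs ! a) * minner (bs ! a) X)"
proof -
  have bs: "bs ! a \<in> carrier_mat N N" if "a < length bs" for a
    using assms(2) monb_nth_mem[OF assms(1) that] by auto
  have "minner Y X = inner_on ({..<N} \<times> {..<N}) (($$) Y) (($$) X)"
    using assms by (auto intro: minner_eq_inner_on)
  also have "\<dots> = (\<Sum>a<length bs. minner (bs ! a) X * inner_on ({..<N} \<times> {..<N}) (($$) Y) (($$) (bs ! a)))"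
    using assms unfolding monb_def by (intro inner_on_sum_right) auto
  also have "\<dots> = (\<Sum>a<length bs. minner Y (bs ! a) * minner (bs ! a) X)"
    using bs by (intro sum.cong refl) (simp add: minner_eq_inner_on[of _ N])
  finally show ?thesis .
qed

section \<open>Tensor powers\<close>

lemma tensor_pow_carrier [simp]: "tensor_pow q n U \<in> carrier_mat (q ^ n) (q ^ n)"
  unfolding tensor_pow_def by simp

lemma tensor_pow_dim [simp]:
  "dim_row (tensor_pow q n U) = q ^ n" "dim_col (tensor_pow q n U) = q ^ n"
  unfolding tensor_pow_def by simp_all

lemma tensor_pow_index:
  "i < q ^ n \<Longrightarrow> j < q ^ n \<Longrightarrow> tensor_pow q n U $$ (i, j) = (\<Prod>k<n. U $$ (digit q k i, digit q k j))"
  unfolding tensor_pow_def by simp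

lemma tensor_pow_Suc_index:
  assumes "i < q ^ Suc n" "j < q ^ Suc n"
  shows "tensor_pow q (Suc n) U $$ (i, j) = U $$ (i mod q, j mod q) * tensor_pow q n U $$ (i div q, j div q)"
proof -
  have digit_Suc: "digit q (Suc k) i = digit q k (i div q)" for k i
    unfolding digit_def by (simp add: div_mult2_eq)
  have "i div q < q ^ n" "j div q < q ^ n"
    using assms by (auto intro!: less_mult_imp_div_less simp: mult.commute)
  then show ?thesis
    using assms
    by (simp add: tensor_pow_index prod.lessThan_Suc_shift digit_Suc del: prod.lessThan_Suc)
      (simp add: digit_def)
qed

lemma sum_lessThan_mult_split:
  fixes f :: "nat \<Rightarrow> 'a :: comm_monoid_add"
  shows "(\<Sum>m<M * q. f m) = (\<Sum>m<M. \<Sum>l<q. f (m * q + l))"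
proof -
  have "(\<Sum>m<M * q. f m) = (\<Sum>m<M. sum f {m * q..<m * q + q})"
    by (rule sum.nat_group[symmetric])
  also have "\<dots> = (\<Sum>m<M. \<Sum>l<q. f (m * q + l))"
  proof (rule sum.cong[OF refl])
    fix m
    show "sum f {m * q..<m * q + q} = (\<Sum>l<q. f (m * q + l))"
      using sum.atLeastLessThan_shift_0[of f "m * q" "m * q + q"] by (simp add: atLeast0LessThan)
  qed
  finally show ?thesis .
qed

lemma tensor_pow_mult:
  assumes "0 < q" "A \<in> carrier_mat q q" "B \<in> carrier_mat q q"
  shows "tensor_pow q n (A * B) = tensor_pow q n A * tensor_pow q n B"
proof (induction n)
  case 0
  show ?case
    by (rule eq_matI) (auto simp: tensor_pow_def scalar_prod_def)
next
  case (Suc n)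
  let ?T = "tensor_pow q n" and ?S = "tensor_pow q (Suc n)"
  show ?case
  proof (rule eq_matI)
    fix i j assume "i < dim_row (?S A * ?S B)" "j < dim_col (?S A * ?S B)"
    then have i: "i < q ^ Suc n" and j: "j < q ^ Suc n"
      by auto
    have idx: "m * q + l < q ^ Suc n" "(m * q + l) mod q = l" "(m * q + l) div q = m"
      if "m < q ^ n" "l < q" for m l
    proof -
      have "m * q + l < (m + 1) * q" using that by simp
      also have "\<dots> \<le> q ^ n * q" using that by (intro mult_right_mono) auto
      finally show "m * q + l < q ^ Suc n" by (simp add: mult.commute)
    qed (use that in auto)
    have "(?S A * ?S B) $$ (i, j) = (\<Sum>m<q ^ n * q. ?S A $$ (i, m) * ?S B $$ (m, j))"
      using i j by (simp add: scalar_prod_def atLeast0LessThan mult.commute)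
    also have "\<dots> = (\<Sum>m<q ^ n. \<Sum>l<q. ?S A $$ (i, m * q + l) * ?S B $$ (m * q + l, j))"
      by (rule sum_lessThan_mult_split)
    also have "\<dots> = (\<Sum>m<q ^ n. \<Sum>l<q.
        (A $$ (i mod q, l) * B $$ (l, j mod q)) * (?T A $$ (i div q, m) * ?T B $$ (m, j div q)))"
      using i j idx by (intro sum.cong refl) (simp add: tensor_pow_Suc_index)
    also have "\<dots> = (A * B) $$ (i mod q, j mod q) * (?T A * ?T B) $$ (i div q, j div q)"
      using assms i j
      by (simp add: scalar_prod_def atLeast0LessThan sum_product sum.swap[of _ "{..<q}"]
          less_mult_imp_div_less mult.commute)
    also have "\<dots> = ?S (A * B) $$ (i, j)"
      using i j by (simp add: tensor_pow_Suc_index Suc.IH)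
    finally show "?S (A * B) $$ (i, j) = (?S A * ?S B) $$ (i, j)"
      by simp
  qed auto
qed

lemma tensor_pow_one:
  assumes "0 < q"
  shows "tensor_pow q n (1\<^sub>m q) = 1\<^sub>m (q ^ n)"
proof (induction n)
  case 0
  show ?case
    by (rule eq_matI) (auto simp: tensor_pow_def)
next
  case (Suc n)
  show ?case
  proof (rule eq_matI)
    fix i j assume "i < dim_row (1\<^sub>m (q ^ Suc n))" "j < dim_col (1\<^sub>m (q ^ Suc n) :: complex mat)"
    then have i: "i < q ^ Suc n" and j: "j < q ^ Suc n"
      by auto
    then have "i div q < q ^ n" "j div q < q ^ n"
      by (auto intro!: less_mult_imp_div_less simp: mult.commute)
    moreover have "(i mod q = j mod q \<and> i div q = j div q) \<longleftrightarrow> i = j"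
      by (metis div_mult_mod_eq)
    ultimately show "tensor_pow q (Suc n) (1\<^sub>m q) $$ (i, j) = 1\<^sub>m (q ^ Suc n) $$ (i, j)"
      using i j assms by (auto simp: tensor_pow_Suc_index Suc.IH)
  qed auto
qed

lemma tensor_pow_cadj:
  assumes "U \<in> carrier_mat q q" "0 < q"
  shows "tensor_pow q n (cadj U) = cadj (tensor_pow q n U)"
proof (rule eq_matI)
  fix i j assume "i < dim_row (cadj (tensor_pow q n U))" "j < dim_col (cadj (tensor_pow q n U))"
  moreover have "digit q k i < q" for k i
    unfolding digit_def using assms by simp
  ultimately show "tensor_pow q n (cadj U) $$ (i, j) = cadj (tensor_pow q n U) $$ (i, j)"
    using assms by (simp add: tensor_pow_index cnj_prod)
qed auto

section \<open>Unitary representations of finite groups\<close>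

text \<open>\<open>K g x y\<close> is the \<open>(x, y)\<close> entry of the matrix of \<open>g\<close> in an orthonormal basis indexed by
  \<open>X\<close>; the second clause is unitarity, \<open>K (g\<inverse>) = K g\<^sup>*\<close>.\<close>

definition unitary_matrix_rep ::
  "'g set \<Rightarrow> ('g \<Rightarrow> 'g \<Rightarrow> 'g) \<Rightarrow> ('g \<Rightarrow> 'g) \<Rightarrow> 'x set \<Rightarrow> ('g \<Rightarrow> 'x \<Rightarrow> 'x \<Rightarrow> complex) \<Rightarrow> bool" where
  "unitary_matrix_rep G mul inv_op X K \<longleftrightarrow>
     (\<forall>g\<in>G. \<forall>h\<in>G. \<forall>x\<in>X. \<forall>z\<in>X. (\<Sum>y\<in>X. K g x y * K h y z) = K (mul g h) x z) \<and>
     (\<forall>g\<in>G. \<forall>x\<in>X. \<forall>y\<in>X. K (inv_op g) x y = cnj (K g y x))"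

lemma unitary_matrix_rep_cnj:
  assumes "unitary_matrix_rep G mul inv_op X K"
  shows "unitary_matrix_rep G mul inv_op X (\<lambda>g x y. cnj (K g x y))"
  using assms unfolding unitary_matrix_rep_def by (simp flip: cnj_sum complex_cnj_mult)

lemma unitary_matrix_rep_tensor:
  assumes "unitary_matrix_rep G mul inv_op X K" "unitary_matrix_rep G mul inv_op Y L"
  shows "unitary_matrix_rep G mul inv_op (X \<times> Y) (\<lambda>g x y. K g (fst x) (fst y) * L g (snd x) (snd y))"
  unfolding unitary_matrix_rep_def
proof (intro conjI ballI)
  fix g h x z assume "g \<in> G" "h \<in> G" "x \<in> X \<times> Y" "z \<in> X \<times> Y"
  have "(\<Sum>y\<in>X \<times> Y. K g (fst x) (fst y) * L g (snd x) (snd y) * (K h (fst y) (fst z) * L h (snd y) (snd z)))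
      = (\<Sum>y\<in>X. K g (fst x) y * K h y (fst z)) * (\<Sum>y\<in>Y. L g (snd x) y * L h y (snd z))"
    by (simp add: sum.cartesian_product case_prod_unfold sum_product mult_ac)
  also have "\<dots> = K (mul g h) (fst x) (fst z) * L (mul g h) (snd x) (snd z)"
    using assms \<open>g \<in> G\<close> \<open>h \<in> G\<close> \<open>x \<in> X \<times> Y\<close> \<open>z \<in> X \<times> Y\<close>
    unfolding unitary_matrix_rep_def by auto
  finally show "(\<Sum>y\<in>X \<times> Y. K g (fst x) (fst y) * L g (snd x) (snd y) * (K h (fst y) (fst z) * L h (snd y) (snd z)))
      = K (mul g h) (fst x) (fst z) * L (mul g h) (snd x) (snd z)" .
next
  fix g x y assume "g \<in> G" "x \<in> X \<times> Y" "y \<in> X \<times> Y"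
  then show "K (inv_op g) (fst x) (fst y) * L (inv_op g) (snd x) (snd y) = cnj (K g (fst y) (fst x) * L g (snd y) (snd x))"
    using assms unfolding unitary_matrix_rep_def by auto
qed

lemma self_adjoint_idempotent_trace_zero:
  fixes P :: "'x \<Rightarrow> 'x \<Rightarrow> complex"
  assumes "finite X"
    and idem: "\<And>x z. x \<in> X \<Longrightarrow> z \<in> X \<Longrightarrow> (\<Sum>y\<in>X. P x y * P y z) = c * P x z"
    and self_adjoint: "\<And>x y. x \<in> X \<Longrightarrow> y \<in> X \<Longrightarrow> P x y = cnj (P y x)"
    and trace: "(\<Sum>x\<in>X. P x x) = 0"
    and "x \<in> X" "y \<in> X"
  shows "P x y = 0"
proof -
  have "of_real ((cmod (P x y))\<^sup>2) = P x y * P y x" if "x \<in> X" "y \<in> X" for x y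
    unfolding complex_norm_square using self_adjoint[OF that(2,1)] by simp
  then have "of_real (\<Sum>x\<in>X. \<Sum>y\<in>X. (cmod (P x y))\<^sup>2) = (\<Sum>x\<in>X. \<Sum>y\<in>X. P x y * P y x)"
    by simp
  also have "\<dots> = c * (\<Sum>x\<in>X. P x x)"
    by (simp add: idem sum_distrib_left)
  finally have "(\<Sum>x\<in>X. \<Sum>y\<in>X. (cmod (P x y))\<^sup>2) = 0"
    by (simp only: trace mult_zero_right of_real_eq_0_iff)
  then show ?thesis
    using assms(1,5,6) by (simp add: sum_nonneg_eq_0_iff sum_nonneg)
qed

text \<open>The average \<open>P = \<Sum>\<^sub>g K g\<close> is \<open>|G|\<close> times the orthogonal projection onto the
  invariant vectors, so it vanishes when its trace, the character sum, does.\<close>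

lemma unitary_matrix_rep_average_eq_0:
  fixes K :: "'g \<Rightarrow> 'x \<Rightarrow> 'x \<Rightarrow> complex"
  assumes "finite X"
    and mul_bij: "\<And>g. g \<in> G \<Longrightarrow> bij_betw (mul g) G G" and inv_bij: "bij_betw inv_op G G"
    and rep: "unitary_matrix_rep G mul inv_op X K"
    and trace: "(\<Sum>g\<in>G. \<Sum>x\<in>X. K g x x) = 0"
    and "x \<in> X" "y \<in> X"
  shows "(\<Sum>g\<in>G. K g x y) = 0"
proof (rule self_adjoint_idempotent_trace_zero[of X "\<lambda>x y. \<Sum>g\<in>G. K g x y" "of_nat (card G)"])
  fix x z assume "x \<in> X" "z \<in> X"
  have "(\<Sum>y\<in>X. (\<Sum>g\<in>G. K g x y) * (\<Sum>h\<in>G. K h y z)) = (\<Sum>g\<in>G. \<Sum>h\<in>G. \<Sum>y\<in>X. K g x y * K h y z)"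
    by (simp add: sum_product sum.swap[of _ X])
  also have "\<dots> = (\<Sum>g\<in>G. \<Sum>h\<in>G. K (mul g h) x z)"
    using rep \<open>x \<in> X\<close> \<open>z \<in> X\<close> unfolding unitary_matrix_rep_def by (intro sum.cong refl) auto
  also have "\<dots> = (\<Sum>g\<in>G. \<Sum>h\<in>G. K h x z)"
    by (intro sum.cong refl sum.reindex_bij_betw mul_bij)
  finally show "(\<Sum>y\<in>X. (\<Sum>g\<in>G. K g x y) * (\<Sum>h\<in>G. K h y z)) = of_nat (card G) * (\<Sum>g\<in>G. K g x z)"
    by simp
next
  fix x y assume "x \<in> X" "y \<in> X"
  have "(\<Sum>g\<in>G. K g x y) = (\<Sum>g\<in>G. K (inv_op g) x y)"
    using sum.reindex_bij_betw[OF inv_bij, of "\<lambda>g. K g x y"] by simp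
  then show "(\<Sum>g\<in>G. K g x y) = cnj (\<Sum>g\<in>G. K g y x)"
    using rep \<open>x \<in> X\<close> \<open>y \<in> X\<close> unfolding unitary_matrix_rep_def by (simp add: cnj_sum)
next
  show "(\<Sum>x\<in>X. \<Sum>g\<in>G. K g x x) = 0"
    using trace by (simp add: sum.swap[of _ X])
qed (use assms in auto)

lemma unitary_matrix_rep_invariant_eq_0:
  fixes K :: "'g \<Rightarrow> 'x \<Rightarrow> 'x \<Rightarrow> complex"
  assumes "finite G" "G \<noteq> {}" "finite X"
    and "\<And>g. g \<in> G \<Longrightarrow> bij_betw (mul g) G G" "bij_betw inv_op G G"
    and "unitary_matrix_rep G mul inv_op X K"
    and "(\<Sum>g\<in>G. \<Sum>x\<in>X. K g x x) = 0"
    and invariant: "\<And>g x. g \<in> G \<Longrightarrow> x \<in> X \<Longrightarrow> (\<Sum>y\<in>X. K g x y * t y) = t x"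
    and "x \<in> X"
  shows "t x = 0"
proof -
  have "0 = (\<Sum>y\<in>X. (\<Sum>g\<in>G. K g x y) * t y)"
    using unitary_matrix_rep_average_eq_0[OF assms(3-7) \<open>x \<in> X\<close>] by simp
  also have "\<dots> = (\<Sum>g\<in>G. \<Sum>y\<in>X. K g x y * t y)"
    unfolding sum_distrib_right by (rule sum.swap)
  also have "\<dots> = of_nat (card G) * t x"
    using invariant \<open>x \<in> X\<close> by simp
  finally show ?thesis
    using assms(1,2) by simp
qed

locale finite_unitary_rep =
  fixes q N :: nat and G :: "complex mat set" and \<rho> :: "complex mat \<Rightarrow> complex mat"
  assumes subgroup: "finite_subgroup_U q G"
    and rep_carrier: "\<And>g. g \<in> G \<Longrightarrow> \<rho> g \<in> carrier_mat N N"
    and rep_mult: "\<And>g h. g \<in> G \<Longrightarrow> h \<in> G \<Longrightarrow> \<rho> (g * h) = \<rho> g * \<rho> h"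
    and rep_cadj: "\<And>g. g \<in> G \<Longrightarrow> \<rho> (cadj g) = cadj (\<rho> g)"
    and rep_one: "\<rho> (1\<^sub>m q) = 1\<^sub>m N"
begin

lemma finite_G: "finite G"
  and one_mem: "1\<^sub>m q \<in> G"
  and mult_mem: "g \<in> G \<Longrightarrow> h \<in> G \<Longrightarrow> g * h \<in> G"
  and cadj_mem: "g \<in> G \<Longrightarrow> cadj g \<in> G"
  using subgroup unfolding finite_subgroup_U_def by auto

lemma mem_carrier: "g \<in> G \<Longrightarrow> g \<in> carrier_mat q q"
  and mult_cadj_self: "g \<in> G \<Longrightarrow> g * cadj g = 1\<^sub>m q"
  and cadj_mult_self: "g \<in> G \<Longrightarrow> cadj g * g = 1\<^sub>m q"
  using subgroup unfolding finite_subgroup_U_def unitary_mat_def by auto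

lemma rep_mult_cadj_self: "g \<in> G \<Longrightarrow> \<rho> g * cadj (\<rho> g) = 1\<^sub>m N"
  using rep_mult[of g "cadj g"] by (simp add: cadj_mem rep_cadj mult_cadj_self rep_one)

lemma bij_betw_mult: "g \<in> G \<Longrightarrow> bij_betw ((*) g) G G"
  by (rule bij_betw_byWitness[where f' = "(*) (cadj g)"])
    (auto simp: mult_mem cadj_mem mem_carrier mult_cadj_self cadj_mult_self left_mult_one_mat[OF mem_carrier]
      simp flip: assoc_mult_mat[of _ q q _ q _ q])

lemma bij_betw_cadj: "bij_betw cadj G G"
  by (rule bij_betw_byWitness[where f' = cadj]) (auto simp: cadj_mem)

end

lemma finite_unitary_rep_tensor_pow:
  assumes "0 < q" "finite_subgroup_U q G"
  shows "finite_unitary_rep q (q ^ n) G (tensor_pow q n)"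
proof
  have carrier: "g \<in> G \<Longrightarrow> g \<in> carrier_mat q q" for g
    using assms(2) unfolding finite_subgroup_U_def unitary_mat_def by auto
  show "\<And>g h. g \<in> G \<Longrightarrow> h \<in> G \<Longrightarrow> tensor_pow q n (g * h) = tensor_pow q n g * tensor_pow q n h"
    using assms(1) carrier by (simp add: tensor_pow_mult)
  show "\<And>g. g \<in> G \<Longrightarrow> tensor_pow q n (cadj g) = cadj (tensor_pow q n g)"
    using assms(1) carrier by (simp add: tensor_pow_cadj)
  show "tensor_pow q n (1\<^sub>m q) = 1\<^sub>m (q ^ n)"
    using assms(1) by (rule tensor_pow_one)
qed (use assms(2) in auto)

section \<open>Invariant subspaces and the compression map\<close>

locale invariant_subspaces = finite_unitary_rep +
  fixes C :: "complex vec set" and W :: "complex mat set"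
  assumes C_subspace: "vsubspace N C"
    and C_invariant: "\<And>g v. g \<in> G \<Longrightarrow> v \<in> C \<Longrightarrow> \<rho> g *\<^sub>v v \<in> C"
    and W_subspace: "msubspace N W"
    and W_invariant: "\<And>g X. g \<in> G \<Longrightarrow> X \<in> W \<Longrightarrow> \<rho> g * X * cadj (\<rho> g) \<in> W"
begin

abbreviation char_C :: "complex mat \<Rightarrow> complex" where
  "char_C \<equiv> vcharacter N (\<lambda>g v. \<rho> g *\<^sub>v v) C"

abbreviation char_W :: "complex mat \<Rightarrow> complex" where
  "char_W \<equiv> mcharacter N (\<lambda>g X. \<rho> g * X * cadj (\<rho> g)) W"

definition basis_C :: "complex vec list" where
  "basis_C = (SOME bs. vonb N C bs)"

definition basis_W :: "complex mat list" where
  "basis_W = (SOME bs. monb N W bs)"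

definition coeff_C :: "complex mat \<Rightarrow> nat \<Rightarrow> nat \<Rightarrow> complex" where
  "coeff_C g i j = vinner (basis_C ! i) (\<rho> g *\<^sub>v basis_C ! j)"

definition coeff_W :: "complex mat \<Rightarrow> nat \<Rightarrow> nat \<Rightarrow> complex" where
  "coeff_W g a b = minner (basis_W ! a) (\<rho> g * basis_W ! b * cadj (\<rho> g))"

lemma C_carrier: "C \<subseteq> carrier_vec N"
  using C_subspace unfolding vsubspace_def by auto

lemma W_carrier: "W \<subseteq> carrier_mat N N"
  using W_subspace unfolding msubspace_def by auto

lemma vonb_basis_C: "vonb N C basis_C"
  unfolding basis_C_def using vonb_exists[OF C_subspace] by (rule someI_ex)

lemma monb_basis_W: "monb N W basis_W"
  unfolding basis_W_def using monb_exists[OF W_subspace] by (rule someI_ex)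

lemma basis_C_mem: "i < length basis_C \<Longrightarrow> basis_C ! i \<in> C"
  by (rule vonb_nth_mem[OF vonb_basis_C])

lemma basis_W_mem: "a < length basis_W \<Longrightarrow> basis_W ! a \<in> W"
  by (rule monb_nth_mem[OF monb_basis_W])

lemma basis_C_carrier: "i < length basis_C \<Longrightarrow> basis_C ! i \<in> carrier_vec N"
  using basis_C_mem C_carrier by auto

lemma basis_W_carrier: "a < length basis_W \<Longrightarrow> basis_W ! a \<in> carrier_mat N N"
  using basis_W_mem W_carrier by auto

lemma char_C_eq: "char_C g = (\<Sum>i<length basis_C. coeff_C g i i)"
  by (simp add: vcharacter_def basis_C_def coeff_C_def Let_def)

lemma char_W_eq: "char_W g = (\<Sum>a<length basis_W. coeff_W g a a)"
  by (simp add: mcharacter_def basis_W_def coeff_W_def Let_def)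

lemma coeff_C_unitary_rep: "unitary_matrix_rep G (*) cadj {..<length basis_C} coeff_C"
  unfolding unitary_matrix_rep_def
proof (intro conjI ballI)
  fix g h i j assume g: "g \<in> G" and h: "h \<in> G"
    and i: "i \<in> {..<length basis_C}" and j: "j \<in> {..<length basis_C}"
  let ?c = "\<lambda>i. basis_C ! i"
  have "coeff_C (g * h) i j = vinner (?c i) (\<rho> g *\<^sub>v (\<rho> h *\<^sub>v ?c j))"
    using g h j rep_carrier basis_C_carrier
    by (simp add: coeff_C_def rep_mult assoc_mult_mat_vec[of _ N N _ N])
  also have "\<dots> = vinner (cadj (\<rho> g) *\<^sub>v ?c i) (\<rho> h *\<^sub>v ?c j)"
    using g h i j rep_carrier basis_C_carrier by (intro vinner_adjoint[symmetric] mult_mat_vec_carrier) auto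
  also have "\<dots> = (\<Sum>k<length basis_C. vinner (cadj (\<rho> g) *\<^sub>v ?c i) (?c k) * coeff_C h k j)"
    unfolding coeff_C_def using h j C_invariant basis_C_mem
    by (intro vonb_parseval[OF vonb_basis_C C_carrier]) auto
  also have "\<dots> = (\<Sum>k<length basis_C. coeff_C g i k * coeff_C h k j)"
    using g i rep_carrier basis_C_carrier by (simp add: coeff_C_def vinner_adjoint[of _ N])
  finally show "(\<Sum>k\<in>{..<length basis_C}. coeff_C g i k * coeff_C h k j) = coeff_C (g * h) i j"
    by simp
next
  fix g i j assume g: "g \<in> G" and i: "i \<in> {..<length basis_C}" and j: "j \<in> {..<length basis_C}"
  then show "coeff_C (cadj g) i j = cnj (coeff_C g j i)"
    using rep_carrier basis_C_carrier
    by (simp add: coeff_C_def rep_cadj vinner_adjoint'[of _ N] vinner_cnj[of _ N]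
        mult_mat_vec_carrier[of _ N N])
qed

lemma coeff_W_unitary_rep: "unitary_matrix_rep G (*) cadj {..<length basis_W} coeff_W"
  unfolding unitary_matrix_rep_def
proof (intro conjI ballI)
  fix g h a b assume g: "g \<in> G" and h: "h \<in> G"
    and a: "a \<in> {..<length basis_W}" and b: "b \<in> {..<length basis_W}"
  let ?B = "\<lambda>a. basis_W ! a" and ?U = "\<rho> g" and ?V = "\<rho> h"
  let ?Y = "?V * ?B b * cadj ?V"
  have Y: "?Y \<in> W"
    using h b by (simp add: W_invariant basis_W_mem)
  then have Y_carrier: "?Y \<in> carrier_mat N N"
    using W_carrier by auto
  have "coeff_W (g * h) a b = minner (?B a) (?U * ?Y * cadj ?U)"
    using g h b rep_carrier basis_W_carrier
    by (simp add: coeff_W_def rep_mult cadj_mult[of _ N N _ N] assoc_mult_mat[of _ N N _ N _ N]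
        mult_carrier_mat[of _ N N _ N])
  also have "\<dots> = minner (cadj ?U * ?B a * ?U) ?Y"
    using g a Y_carrier rep_carrier basis_W_carrier by (intro minner_conj'[symmetric]) auto
  also have "\<dots> = (\<Sum>k<length basis_W. minner (cadj ?U * ?B a * ?U) (?B k) * coeff_W h k b)"
    unfolding coeff_W_def using Y by (rule monb_parseval[OF monb_basis_W W_carrier])
  also have "\<dots> = (\<Sum>k<length basis_W. coeff_W g a k * coeff_W h k b)"
    using g a rep_carrier basis_W_carrier by (simp add: coeff_W_def minner_conj'[of _ N])
  finally show "(\<Sum>k\<in>{..<length basis_W}. coeff_W g a k * coeff_W h k b) = coeff_W (g * h) a b"
    by simp
next
  fix g a b assume g: "g \<in> G" and a: "a \<in> {..<length basis_W}" and b: "b \<in> {..<length basis_W}"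
  then show "coeff_W (cadj g) a b = cnj (coeff_W g b a)"
    using rep_carrier basis_W_carrier
    by (simp add: coeff_W_def rep_cadj minner_conj[of _ N, symmetric] minner_cnj[of _ N]
        mult_carrier_mat[of _ N N _ N])
qed

lemma compression_conj_action:
  assumes g: "g \<in> G" and Y: "Y \<in> carrier_mat N N"
    and i: "i < length basis_C" and j: "j < length basis_C"
  shows "vinner (basis_C ! i) ((\<rho> g * Y * cadj (\<rho> g)) *\<^sub>v basis_C ! j) =
    (\<Sum>i'<length basis_C. \<Sum>j'<length basis_C.
      coeff_C g i i' * vinner (basis_C ! i') (Y *\<^sub>v basis_C ! j') * cnj (coeff_C g j j'))"
proof -
  let ?c = "\<lambda>i. basis_C ! i" and ?U = "\<rho> g"
  define v where "v i = cadj ?U *\<^sub>v ?c i" for i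
  have U: "?U \<in> carrier_mat N N"
    using g by (rule rep_carrier)
  have v_mem: "v k \<in> C" if "k < length basis_C" for k
    using C_invariant[OF cadj_mem[OF g] basis_C_mem[OF that]] by (simp add: v_def rep_cadj g)
  have v_carrier: "v k \<in> carrier_vec N" if "k < length basis_C" for k
    using v_mem[OF that] C_carrier by auto
  have "(?U * Y * cadj ?U) *\<^sub>v ?c j = ?U *\<^sub>v (Y *\<^sub>v v j)"
    using assoc_mult_mat_vec[OF mult_carrier_mat[OF U Y] cadj_carrier[OF U] basis_C_carrier[OF j]]
      assoc_mult_mat_vec[OF U Y v_carrier[OF j]]
    by (simp add: v_def)
  then have "vinner (?c i) ((?U * Y * cadj ?U) *\<^sub>v ?c j) = vinner (v i) (Y *\<^sub>v v j)"
    using vinner_adjoint[OF U basis_C_carrier[OF i] mult_mat_vec_carrier[OF Y v_carrier[OF j]]]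
    by (simp add: v_def)
  also have "\<dots> = (\<Sum>i'<length basis_C. \<Sum>j'<length basis_C.
      vinner (v i) (?c i') * vinner (?c i') (Y *\<^sub>v ?c j') * vinner (?c j') (v j))"
    by (rule vonb_sandwich[OF vonb_basis_C C_carrier v_mem[OF i] v_mem[OF j] Y])
  also have "\<dots> = (\<Sum>i'<length basis_C. \<Sum>j'<length basis_C.
      coeff_C g i i' * vinner (?c i') (Y *\<^sub>v ?c j') * cnj (coeff_C g j j'))"
    using U i j basis_C_carrier
    by (intro sum.cong refl)
      (simp add: v_def coeff_C_def vinner_adjoint vinner_adjoint' vinner_cnj[of _ N] mult_mat_vec_carrier[of _ N N])
  finally show ?thesis .
qed

lemma basis_W_conj_action:
  assumes g: "g \<in> G" and a: "a < length basis_W" and v: "v \<in> carrier_vec N" and w: "w \<in> carrier_vec N"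
  shows "(\<Sum>b<length basis_W. cnj (coeff_W g a b) * vinner v ((\<rho> g * basis_W ! b * cadj (\<rho> g)) *\<^sub>v w))
    = vinner v (basis_W ! a *\<^sub>v w)"
proof -
  let ?B = "\<lambda>a. basis_W ! a" and ?U = "\<rho> g"
  define Z where "Z = cadj ?U * ?B a * ?U"
  define Q where "Q = ket_bra v w"
  have U: "?U \<in> carrier_mat N N"
    using g by (rule rep_carrier)
  have Q: "Q \<in> carrier_mat N N"
    unfolding Q_def using v w by (rule ket_bra_carrier)
  have Z: "Z \<in> W"
    using W_invariant[OF cadj_mem[OF g] basis_W_mem[OF a]] by (simp add: Z_def rep_cadj g)
  then have Z_carrier: "Z \<in> carrier_mat N N"
    using W_carrier by auto
  have summand: "cnj (coeff_W g a b) * vinner v ((?U * ?B b * cadj ?U) *\<^sub>v w)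
      = minner (cadj ?U * Q * ?U) (?B b) * minner (?B b) Z" if "b < length basis_W" for b
  proof -
    have "coeff_W g a b = minner Z (?B b)"
      unfolding coeff_W_def Z_def using U a that basis_W_carrier by (intro minner_conj'[symmetric]) auto
    moreover have "vinner v ((?U * ?B b * cadj ?U) *\<^sub>v w) = minner (cadj ?U * Q * ?U) (?B b)"
      unfolding Q_def using U v w that basis_W_carrier
      by (simp add: minner_ket_bra[symmetric, of _ N] minner_conj'[of _ N] ket_bra_carrier
          mult_carrier_mat[of _ N N _ N])
    ultimately show ?thesis
      using Z_carrier that basis_W_carrier by (simp add: minner_cnj[of _ N])
  qed
  have "(\<Sum>b<length basis_W. cnj (coeff_W g a b) * vinner v ((?U * ?B b * cadj ?U) *\<^sub>v w))
      = (\<Sum>b<length basis_W. minner (cadj ?U * Q * ?U) (?B b) * minner (?B b) Z)"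
    by (intro sum.cong refl) (simp add: summand)
  also have "\<dots> = minner (cadj ?U * Q * ?U) Z"
    by (rule monb_parseval[OF monb_basis_W W_carrier Z, symmetric])
  also have "\<dots> = minner Q (?U * Z * cadj ?U)"
    using Q Z_carrier U by (rule minner_conj')
  also have "?U * Z * cadj ?U = ?B a"
    unfolding Z_def using U a basis_W_carrier rep_mult_cadj_self[OF g] by (intro conj_mult_cancel) auto
  finally show ?thesis
    unfolding Q_def using v w a basis_W_carrier by (simp add: minner_ket_bra)
qed

text \<open>\<open>coeff_hom\<close> is the matrix of the representation \<open>\<rho>\<^sub>W\<^sup>* \<otimes> \<rho>\<^sub>C \<otimes> \<rho>\<^sub>C\<^sup>*\<close> on
  \<open>Hom(W, End C)\<close>, in the basis indexed by triples \<open>(a, i, j)\<close> of indices of the two bases;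
  \<open>compression\<close> is the coordinate vector of the map \<open>X \<mapsto> P\<^sub>C X P\<^sub>C\<close>.\<close>

definition hom_index :: "(nat \<times> nat \<times> nat) set" where
  "hom_index = {..<length basis_W} \<times> {..<length basis_C} \<times> {..<length basis_C}"

definition coeff_hom :: "complex mat \<Rightarrow> nat \<times> nat \<times> nat \<Rightarrow> nat \<times> nat \<times> nat \<Rightarrow> complex" where
  "coeff_hom g x y = cnj (coeff_W g (fst x) (fst y)) *
     (coeff_C g (fst (snd x)) (fst (snd y)) * cnj (coeff_C g (snd (snd x)) (snd (snd y))))"

definition compression :: "nat \<times> nat \<times> nat \<Rightarrow> complex" where
  "compression x = vinner (basis_C ! fst (snd x)) (basis_W ! fst x *\<^sub>v basis_C ! snd (snd x))"

lemma sum_hom_index: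
  "(\<Sum>x\<in>hom_index. f x) = (\<Sum>a<length basis_W. \<Sum>i<length basis_C. \<Sum>j<length basis_C. f (a, i, j))"
  by (simp add: hom_index_def sum.cartesian_product)

lemma coeff_hom_unitary_rep: "unitary_matrix_rep G (*) cadj hom_index coeff_hom"
  unfolding hom_index_def coeff_hom_def[abs_def]
  by (intro unitary_matrix_rep_tensor unitary_matrix_rep_cnj coeff_C_unitary_rep coeff_W_unitary_rep)

lemma coeff_hom_trace:
  "(\<Sum>x\<in>hom_index. coeff_hom g x x) = cnj (char_W g) * (char_C g * cnj (char_C g))"
proof -
  have "(\<Sum>x\<in>hom_index. coeff_hom g x x) = (\<Sum>a<length basis_W. cnj (coeff_W g a a) *
      (\<Sum>i<length basis_C. coeff_C g i i * (\<Sum>j<length basis_C. cnj (coeff_C g j j))))"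
    by (simp add: sum_hom_index coeff_hom_def sum_distrib_left)
  also have "\<dots> = (\<Sum>a<length basis_W. cnj (coeff_W g a a)) *
      ((\<Sum>i<length basis_C. coeff_C g i i) * (\<Sum>j<length basis_C. cnj (coeff_C g j j)))"
    by (simp only: sum_distrib_right[symmetric])
  finally show ?thesis
    by (simp add: char_C_eq char_W_eq cnj_sum)
qed

lemma compression_invariant:
  assumes g: "g \<in> G" and x: "x \<in> hom_index"
  shows "(\<Sum>y\<in>hom_index. coeff_hom g x y * compression y) = compression x"
proof -
  obtain a i j where x_eq: "x = (a, i, j)" and a: "a < length basis_W"
    and i: "i < length basis_C" and j: "j < length basis_C"
    using x unfolding hom_index_def by auto
  let ?c = "\<lambda>i. basis_C ! i" and ?B = "\<lambda>a. basis_W ! a"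
  have "(\<Sum>y\<in>hom_index. coeff_hom g x y * compression y)
      = (\<Sum>b<length basis_W. cnj (coeff_W g a b) * (\<Sum>i'<length basis_C. \<Sum>j'<length basis_C.
          coeff_C g i i' * vinner (?c i') (?B b *\<^sub>v ?c j') * cnj (coeff_C g j j')))"
    by (simp add: sum_hom_index coeff_hom_def compression_def x_eq sum_distrib_left mult_ac)
  also have "\<dots> = (\<Sum>b<length basis_W. cnj (coeff_W g a b) *
      vinner (?c i) ((\<rho> g * ?B b * cadj (\<rho> g)) *\<^sub>v ?c j))"
    using g i j basis_W_carrier by (simp add: compression_conj_action)
  also have "\<dots> = compression x"
    using g a i j basis_C_carrier by (simp add: basis_W_conj_action compression_def x_eq)
  finally show ?thesis .
qed

lemma compression_eq_0:
  assumes "(\<Sum>g\<in>G. cnj (char_C g) * char_W g * char_C g) = 0"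
    and "x \<in> hom_index"
  shows "compression x = 0"
proof (rule unitary_matrix_rep_invariant_eq_0[OF finite_G _ _ bij_betw_mult bij_betw_cadj
      coeff_hom_unitary_rep _ compression_invariant \<open>x \<in> hom_index\<close>])
  show "G \<noteq> {}"
    using one_mem by auto
  show "finite hom_index"
    by (simp add: hom_index_def)
  have "(\<Sum>g\<in>G. \<Sum>x\<in>hom_index. coeff_hom g x x) = cnj (\<Sum>g\<in>G. cnj (char_C g) * char_W g * char_C g)"
    by (simp add: coeff_hom_trace cnj_sum mult_ac)
  then show "(\<Sum>g\<in>G. \<Sum>x\<in>hom_index. coeff_hom g x x) = 0"
    using assms(1) by simp
qed

theorem knill_laflamme_zero:
  assumes "(\<Sum>g\<in>G. cnj (char_C g) * char_W g * char_C g) = 0"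
    and E: "E \<in> W" and \<psi>: "\<psi> \<in> C" and \<phi>: "\<phi> \<in> C"
  shows "vinner \<psi> (E *\<^sub>v \<phi>) = 0"
proof -
  let ?c = "\<lambda>i. basis_C ! i" and ?B = "\<lambda>a. basis_W ! a"
  have E_carrier: "E \<in> carrier_mat N N"
    using E W_carrier by auto
  have "vinner (?c i) (E *\<^sub>v ?c j) = 0" if i: "i < length basis_C" and j: "j < length basis_C" for i j
  proof -
    have "vinner (?c i) (E *\<^sub>v ?c j) = minner (ket_bra (?c i) (?c j)) E"
      using i j E_carrier basis_C_carrier by (simp add: minner_ket_bra[of _ N])
    also have "\<dots> = (\<Sum>a<length basis_W. minner (ket_bra (?c i) (?c j)) (?B a) * minner (?B a) E)"
      by (rule monb_parseval[OF monb_basis_W W_carrier E])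
    also have "\<dots> = (\<Sum>a<length basis_W. compression (a, i, j) * minner (?B a) E)"
      using i j basis_C_carrier basis_W_carrier by (simp add: minner_ket_bra[of _ N] compression_def)
    also have "\<dots> = 0"
      using i j compression_eq_0[OF assms(1)] by (simp add: hom_index_def)
    finally show ?thesis .
  qed
  then show ?thesis
    using E_carrier by (simp add: vonb_sandwich[OF vonb_basis_C C_carrier \<psi> \<phi>])
qed

end

theorem lemma5:
  fixes q n :: nat and G :: "complex mat set" and C :: "complex vec set"
    and W :: "complex mat set" and E :: "complex mat"
    and lam R :: "complex mat \<Rightarrow> complex"
  assumes "q \<ge> 1" and "n \<ge> 1"
    and "finite_subgroup_U q G"
    and "vsubspace (q ^ n) C"
    and "vinvariant G (tensor_action q n) C"
    and "virreducible (q ^ n) G (tensor_action q n) C"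
    and "\<forall>g\<in>G. lam g = vcharacter (q ^ n) (tensor_action q n) C g"
    and "msubspace (q ^ n) W"
    and "minvariant {U. unitary_mat q U} (conj_action q n) W"
    and "mirreducible (q ^ n) {U. unitary_mat q U} (conj_action q n) W"
    and "\<forall>U. unitary_mat q U \<longrightarrow> R U = mcharacter (q ^ n) (conj_action q n) W U"
    and "E \<in> W"
    and "(1 / of_nat (card G)) * (\<Sum>g\<in>G. cnj 1 * (cnj (lam g) * R g * lam g)) = 0"
  shows "\<exists>c::complex. \<forall>\<psi>\<in>C. \<forall>\<phi>\<in>C. vinner \<psi> (E *\<^sub>v \<phi>) = c * vinner \<psi> \<phi>"
proof -
  interpret finite_unitary_rep q "q ^ n" G "tensor_pow q n"
    using assms(1,3) by (intro finite_unitary_rep_tensor_pow) auto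
  have actions: "tensor_action q n = (\<lambda>g v. tensor_pow q n g *\<^sub>v v)"
    "conj_action q n = (\<lambda>g X. tensor_pow q n g * X * cadj (tensor_pow q n g))"
    by (simp_all add: fun_eq_iff tensor_action_def conj_action_def)
  have unitary: "g \<in> G \<Longrightarrow> unitary_mat q g" for g
    using subgroup unfolding finite_subgroup_U_def by auto
  interpret invariant_subspaces q "q ^ n" G "tensor_pow q n" C W
    using assms(4,5,8,9) unitary unfolding vinvariant_def minvariant_def actions
    by unfold_locales auto
  have "card G \<noteq> 0"
    using finite_G one_mem by auto
  then have "(\<Sum>g\<in>G. cnj (char_C g) * char_W g * char_C g) = 0"
    using assms(7,11,13) unitary by (simp add: actions)
  then have "\<forall>\<psi>\<in>C. \<forall>\<phi>\<in>C. vinner \<psi> (E *\<^sub>v \<phi>) = 0 * vinner \<psi> \<phi>"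
    using knill_laflamme_zero assms(12) by simp
  then show ?thesis ..
qed

end
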